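(* For every compact set $K\subset\mathbb C^2\setminus C(p)$ there exists $\eta>0$ such that $K\subset f_a(V_-)$ for all $a$ with $0<|a|<\eta$. In particular every point of $\mathbb C^2\setminus C(p)$ lies in $f_a(V_-)$ for all sufficiently small $a\neq0$.
   Context: $p(x)=x^2+c$, $f_a(x,y)=(p(x)-ay,\,x)$, $C(p)=\{(x,y):p(y)=x\}$. Here $\alpha>0$ is fixed and $V_-=\{(x,y):|y|>|x|,\ |y|>\alpha\}$. *)

theory Defs
  imports "HOL-Analysis.Analysis"
begin

definition quadp :: "complex \<Rightarrow> complex \<Rightarrow> complex" where
  "quadp c x = x^2 + c"

definition henon :: "complex \<Rightarrow> complex \<Rightarrow> complex \<times> complex \<Rightarrow> complex \<times> complex" where
  "henon c a = (\<lambda>(x, y). (quadp c x - a * y, x))"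

definition Cp :: "complex \<Rightarrow> (complex \<times> complex) set" where
  "Cp c = {(x, y). quadp c y = x}"

definition Vminus :: "real \<Rightarrow> (complex \<times> complex) set" where
  "Vminus \<alpha> = {(x, y). cmod y > cmod x \<and> cmod y > \<alpha>}"

end

theory Submission
  imports Defs
begin

(* For a \<noteq> 0 the Henon map f_a(x,y) = (p(x) - a y, x) is invertible, with
   inverse (X,Y) \<mapsto> (Y, (p(Y) - X)/a).  Hence (X,Y) lies in f_a(V_-) exactly when this
   preimage satisfies the two inequalities defining V_-, i.e. when
       |p(Y) - X| > |a| |Y|   and   |p(Y) - X| > |a| \<alpha>.
   On a compact set K disjoint from C(p) the continuous function |p(Y) - X| is bounded
   below by some \<delta> > 0 and |Y| is bounded above by some M, so both inequalities hold on
   all of K as soon as 0 < |a| < \<delta>/(M + \<alpha>).  The pointwise statement is the case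
   K = {z}. *)

lemma henon_eq_iff:
  assumes "a \<noteq> 0"
  shows "henon c a (x, y) = (X, Y) \<longleftrightarrow> x = Y \<and> y = (quadp c Y - X) / a"
  using assms by (auto simp: henon_def field_simps)

lemma mem_henon_image_Vminus_iff:
  assumes "a \<noteq> 0"
  shows "(X, Y) \<in> henon c a ` Vminus \<alpha> \<longleftrightarrow>
           cmod a * cmod Y < cmod (quadp c Y - X) \<and> cmod a * \<alpha> < cmod (quadp c Y - X)"
proof -
  have "(X, Y) \<in> henon c a ` Vminus \<alpha> \<longleftrightarrow> (Y, (quadp c Y - X) / a) \<in> Vminus \<alpha>"
  proof
    assume "(X, Y) \<in> henon c a ` Vminus \<alpha>"
    then obtain x y where "(x, y) \<in> Vminus \<alpha>" "henon c a (x, y) = (X, Y)"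
      by (metis imageE surj_pair)
    then show "(Y, (quadp c Y - X) / a) \<in> Vminus \<alpha>"
      using henon_eq_iff[OF assms] by simp
  next
    assume "(Y, (quadp c Y - X) / a) \<in> Vminus \<alpha>"
    moreover have "henon c a (Y, (quadp c Y - X) / a) = (X, Y)"
      using henon_eq_iff[OF assms] by simp
    ultimately show "(X, Y) \<in> henon c a ` Vminus \<alpha>"
      by (metis image_eqI)
  qed
  also have "\<dots> \<longleftrightarrow> cmod Y < cmod (quadp c Y - X) / cmod a \<and> \<alpha> < cmod (quadp c Y - X) / cmod a"
    by (simp add: Vminus_def norm_divide)
  also have "\<dots> \<longleftrightarrow> cmod a * cmod Y < cmod (quadp c Y - X) \<and> cmod a * \<alpha> < cmod (quadp c Y - X)"
    using assms by (simp add: pos_less_divide_eq mult.commute)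
  finally show ?thesis .
qed

lemma compact_away_from_Cp:
  assumes "compact K" "K \<inter> Cp c = {}"
  obtains \<delta> where "\<delta> > 0" "\<And>X Y. (X, Y) \<in> K \<Longrightarrow> \<delta> \<le> cmod (quadp c Y - X)"
proof (cases "K = {}")
  case True
  then show ?thesis using that[of 1] by auto
next
  case False
  let ?g = "\<lambda>z::complex \<times> complex. cmod (quadp c (snd z) - fst z)"
  have "continuous_on K ?g"
    unfolding quadp_def by (intro continuous_intros)
  then obtain z0 where z0: "z0 \<in> K" "\<And>z. z \<in> K \<Longrightarrow> ?g z0 \<le> ?g z"
    using continuous_attains_inf[OF assms(1) False] by blast
  have "z0 \<notin> Cp c"
    using z0(1) assms(2) by auto
  then have "?g z0 > 0"
    by (cases z0) (auto simp: Cp_def)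
  with z0(2) show ?thesis
    using that[of "?g z0"] by force
qed

lemma compact_snd_bounded:
  fixes K :: "('a::real_normed_vector \<times> 'b::real_normed_vector) set"
  assumes "compact K"
  obtains M where "M \<ge> 0" "\<And>X Y. (X, Y) \<in> K \<Longrightarrow> norm Y \<le> M"
proof -
  obtain M where M: "\<And>z. z \<in> K \<Longrightarrow> norm z \<le> M"
    using compact_imp_bounded[OF assms] bounded_iff by blast
  have "norm Y \<le> max M 0" if "(X, Y) \<in> K" for X Y
    using M[OF that] norm_snd_le[of Y X] by simp
  then show ?thesis
    using that[of "max M 0"] by simp
qed

lemma compact_subset_henon_image:
  assumes "\<alpha> > 0" "compact K" "K \<inter> Cp c = {}"
  shows "\<exists>\<eta>>0. \<forall>a. 0 < cmod a \<and> cmod a < \<eta> \<longrightarrow> K \<subseteq> henon c a ` Vminus \<alpha>"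
proof -
  obtain \<delta> where \<delta>: "\<delta> > 0" "\<And>X Y. (X, Y) \<in> K \<Longrightarrow> \<delta> \<le> cmod (quadp c Y - X)"
    using compact_away_from_Cp[OF assms(2,3)] by blast
  obtain M where M: "M \<ge> 0" "\<And>X Y. (X, Y) \<in> K \<Longrightarrow> cmod Y \<le> M"
    using compact_snd_bounded[OF assms(2)] by blast
  have image: "K \<subseteq> henon c a ` Vminus \<alpha>" if a: "0 < cmod a" "cmod a < \<delta> / (M + \<alpha>)" for a
  proof (clarify)
    fix X Y assume XY: "(X, Y) \<in> K"
    have nz: "a \<noteq> 0"
      using a(1) by auto
    have small: "cmod a * (M + \<alpha>) < cmod (quadp c Y - X)"
      using a(2) M(1) assms(1) \<delta>(2)[OF XY] by (simp add: pos_less_divide_eq)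
    have "cmod a * cmod Y \<le> cmod a * (M + \<alpha>)"
      using M(2)[OF XY] assms(1) by (simp add: mult_left_mono)
    moreover have "cmod a * \<alpha> \<le> cmod a * (M + \<alpha>)"
      using M(1) by (simp add: mult_left_mono)
    ultimately show "(X, Y) \<in> henon c a ` Vminus \<alpha>"
      unfolding mem_henon_image_Vminus_iff[OF nz] using small by linarith
  qed
  show ?thesis
  proof (intro exI conjI allI impI)
    show "\<delta> / (M + \<alpha>) > 0"
      using \<delta>(1) M(1) assms(1) by simp
  next
    fix a assume "0 < cmod a \<and> cmod a < \<delta> / (M + \<alpha>)"
    then show "K \<subseteq> henon c a ` Vminus \<alpha>"
      by (intro image) auto
  qed
qed

theorem lemma4p9:
  fixes c :: complex and \<alpha> :: real
  assumes "\<alpha> > 0"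
  shows "(\<forall>K. compact K \<and> K \<subseteq> UNIV - Cp c \<longrightarrow>
            (\<exists>\<eta>>0. \<forall>a::complex. 0 < cmod a \<and> cmod a < \<eta> \<longrightarrow> K \<subseteq> henon c a ` Vminus \<alpha>))
       \<and> (\<forall>z \<in> UNIV - Cp c. \<exists>\<eta>>0. \<forall>a::complex. 0 < cmod a \<and> cmod a < \<eta> \<longrightarrow> z \<in> henon c a ` Vminus \<alpha>)"
proof (intro conjI allI impI ballI)
  fix K :: "(complex \<times> complex) set"
  assume K: "compact K \<and> K \<subseteq> UNIV - Cp c"
  then have "K \<inter> Cp c = {}"
    by blast
  with K show "\<exists>\<eta>>0. \<forall>a. 0 < cmod a \<and> cmod a < \<eta> \<longrightarrow> K \<subseteq> henon c a ` Vminus \<alpha>"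
    using compact_subset_henon_image[OF assms] by simp
next
  fix z assume "z \<in> UNIV - Cp c"
  then have "{z} \<inter> Cp c = {}"
    by simp
  then show "\<exists>\<eta>>0. \<forall>a. 0 < cmod a \<and> cmod a < \<eta> \<longrightarrow> z \<in> henon c a ` Vminus \<alpha>"
    using compact_subset_henon_image[OF assms compact_sing] by simp
qed

end
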